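(* Let $\mathcal{G}=\{\mathcal{V},\mathcal{E},\boldsymbol{W}\}$ be a connected undirected weighted graph with $N$ vertices, with graph Laplacian $\boldsymbol{L}=\boldsymbol{D}-\boldsymbol{W}=\boldsymbol{U}\boldsymbol{\Lambda}\boldsymbol{U}^T$, where $\boldsymbol{U}=[\boldsymbol{u}_1,\dots,\boldsymbol{u}_N]$ is orthonormal and the eigenvalues are ordered $0=\lambda_1\le\dots\le\lambda_N$. Fix integers $1\le f_L\le f_U\le N$ and let $$C_b=\{\boldsymbol{x}\in\mathbb{R}^N:\ \boldsymbol{u}_i^T\boldsymbol{x}=0\ \text{for all } i\notin[f_L,f_U]\}.$$ Let $\mathcal{V}'=\{v_1,\dots,v_M\}\subseteq\mathcal{V}=\{1,\dots,N\}$ be a set of $M$ distinct sampled vertices and let $\boldsymbol{x}\in C_b$ be a signal with observed signs $s_i=\mathrm{sign}(x_{v_i})\in\{-1,0,1\}$, $i=1,\dots,M$ (with $\mathrm{sign}(0)=0$). Let $$C_v=\{\boldsymbol{y}\in\mathbb{R}^N:\ s_i y_{v_i}\ge 0 \text{ if } s_i\neq 0,\ y_{v_i}=0 \text{ if } s_i=0,\ i=1,\dots,M\},$$ and $C=C_b\cap C_v$. Define $\boldsymbol{P}_b=\boldsymbol{U}\boldsymbol{\Gamma}\boldsymbol{U}^T$, where $\boldsymbol{\Gamma}$ is diagonal with $\Gamma_{kk}=1$ if $k\in[f_L,f_U]$ and $0$ otherwise, and define $\boldsymbol{P}_v:\mathbb{R}^N\to\mathbb{R}^N$ by $(\boldsymbol{P}_v\boldsymbol{y})_j=0$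 if $j=v_i$ for some $i$ with $\mathrm{sign}(y_j)\neq s_i$, and $(\boldsymbol{P}_v\boldsymbol{y})_j=y_j$ otherwise. For an arbitrary initial point $\boldsymbol{x}_0\in\mathbb{R}^N$ define $\boldsymbol{x}_{n+1}=\boldsymbol{P}_b\boldsymbol{P}_v\boldsymbol{x}_n$. Then the sequence $\{\boldsymbol{x}_n\}$ converges to some point $\boldsymbol{x}^*\in C$, and the convergence rate is independent of the choice of the initial point $\boldsymbol{x}_0$.
   Context: $\boldsymbol{D}$ is the diagonal degree matrix with $D_{ii}=\sum_j W_{ij}$, and $W_{ij}>0$ iff $(i,j)\in\mathcal{E}$. $C_b$ is the set of band-limited signals with passband $[f_L,f_U]$; $\boldsymbol{P}_b$ is the orthogonal projection onto $C_b$ and $\boldsymbol{P}_v$ is the projection onto the closed convex cone $C_v$ of signals consistent with the observed signs. *)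

theory Defs
  imports "HOL-Analysis.Analysis"
begin

definition degree_matrix :: "real^'n^'n \<Rightarrow> real^'n^'n" where
  "degree_matrix W = (\<chi> i j. if i = j then (\<Sum>k\<in>UNIV. W $ i $ k) else 0)"

definition laplacian :: "real^'n^'n \<Rightarrow> real^'n^'n" where
  "laplacian W = degree_matrix W - W"

definition graph_edges :: "real^'n^'n \<Rightarrow> ('n \<times> 'n) set" where
  "graph_edges W = {(i, j). W $ i $ j > 0}"

definition graph_connected :: "real^'n^'n \<Rightarrow> bool" where
  "graph_connected W \<longleftrightarrow> (\<forall>i j. (i, j) \<in> (graph_edges W)\<^sup>*)"

definition band_set :: "(nat \<Rightarrow> real^'n) \<Rightarrow> nat \<Rightarrow> nat \<Rightarrow> (real^'n) set" where
  "band_set u fL fU = {x. \<forall>i\<in>{1..CARD('n)}. (i < fL \<or> fU < i) \<longrightarrow> u i \<bullet> x = 0}"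

definition sign_set :: "(nat \<Rightarrow> 'n) \<Rightarrow> nat \<Rightarrow> (nat \<Rightarrow> real) \<Rightarrow> (real^'n) set" where
  "sign_set v M s = {y. \<forall>i\<in>{1..M}.
      (s i \<noteq> 0 \<longrightarrow> s i * y $ v i \<ge> 0) \<and> (s i = 0 \<longrightarrow> y $ v i = 0)}"

definition Pb :: "(nat \<Rightarrow> real^'n) \<Rightarrow> nat \<Rightarrow> nat \<Rightarrow> real^'n \<Rightarrow> real^'n" where
  "Pb u fL fU y = (\<Sum>k\<in>{fL..fU}. (u k \<bullet> y) *\<^sub>R u k)"

definition Pv :: "(nat \<Rightarrow> 'n) \<Rightarrow> nat \<Rightarrow> (nat \<Rightarrow> real) \<Rightarrow> real^'n \<Rightarrow> real^'n" where
  "Pv v M s y = (\<chi> j. if (\<exists>i\<in>{1..M}. j = v i \<and> sgn (y $ j) \<noteq> s i) then 0 else y $ j)"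

end

theory Submission
  imports Defs
begin

(*
  P_v is the metric projection onto the polyhedral cone C_v and P_b the orthogonal projection
  onto the subspace C_b, so T = P_b P_v satisfies |T y - c|^2 + |y - P_v y|^2 <= |y - c|^2 for
  every c in C.  For y in C_b the residual |y - P_v y| dominates the violation of the finitely
  many linear constraints describing C, so Hoffman's error bound gives dist(y, C) <= K |y - P_v y|.
  Every iterate after the first lies in C_b, hence the distance to C shrinks by the fixed factor
  sqrt(1 - 1/K^2) per step, and a Fejer monotone sequence with geometrically decaying distance
  to the closed set C converges geometrically to a point of C.
*)

section \<open>Hoffman's error bound for polyhedral cones\<close>

lemma linear_kernel_distance_bound:
  fixes f :: "'a::euclidean_space \<Rightarrow> 'b::euclidean_space"
  assumes "linear f"
  obtains k where "k \<ge> 0" "\<And>y. \<exists>c. f c = 0 \<and> norm (y - c) \<le> k * norm (f y)"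
proof -
  let ?N = "{c. f c = 0}"
  have N: "span ?N = ?N"
    using linear_subspace_kernel[OF assms] by (rule span_eq_iff[THEN iffD2])
  have "\<forall>w\<in>?N\<^sup>\<bottom>. f w = 0 \<longrightarrow> w = 0"
    unfolding orthogonal_comp_def using orthogonal_self by blast
  then obtain e where e: "e > 0" "\<And>w. w \<in> ?N\<^sup>\<bottom> \<Longrightarrow> e * norm w \<le> norm (f w)"
    using injective_imp_isometric[OF closed_subspace[OF subspace_orthogonal_comp]
        subspace_orthogonal_comp linear_conv_bounded_linear[THEN iffD1, OF assms]]
    by blast
  show thesis
  proof
    show "0 \<le> 1 / e" using e by simp
    fix y
    obtain c w where "c \<in> ?N" and w: "\<And>z. z \<in> ?N \<Longrightarrow> orthogonal z w" and "y = c + w"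
      using orthogonal_subspace_decomp_exists[of ?N y] unfolding N by (metis orthogonal_commute)
    then have "y - c = w" "f y = f w"
      using assms by (auto simp: linear_add)
    moreover have "w \<in> ?N\<^sup>\<bottom>"
      using w by (auto simp: orthogonal_comp_def)
    ultimately have "norm (y - c) \<le> 1 / e * norm (f y)"
      using e by (simp add: field_simps)
    with \<open>c \<in> ?N\<close> show "\<exists>c. f c = 0 \<and> norm (y - c) \<le> 1 / e * norm (f y)"
      by blast
  qed
qed

definition polyhedral_cone ::
    "('a::real_inner \<Rightarrow> 'b::zero) \<Rightarrow> ('i \<Rightarrow> 'a) \<Rightarrow> 'i set \<Rightarrow> 'i set \<Rightarrow> 'a set" where
  "polyhedral_cone g a Z S =
     {c. g c = 0 \<and> (\<forall>j\<in>Z. a j \<bullet> c = 0) \<and> (\<forall>j\<in>S. a j \<bullet> c \<ge> 0)}"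

definition cone_violation ::
    "('a::real_inner \<Rightarrow> 'b::real_normed_vector) \<Rightarrow> ('i \<Rightarrow> 'a) \<Rightarrow> 'i set \<Rightarrow> 'i set \<Rightarrow> 'a \<Rightarrow> real" where
  "cone_violation g a Z S y =
     norm (g y) + (\<Sum>j\<in>Z. \<bar>a j \<bullet> y\<bar>) + (\<Sum>j\<in>S. max 0 (- (a j \<bullet> y)))"

definition has_error_bound ::
    "('a::real_inner \<Rightarrow> 'b::real_normed_vector) \<Rightarrow> ('i \<Rightarrow> 'a) \<Rightarrow> 'i set \<Rightarrow> 'i set \<Rightarrow> bool" where
  "has_error_bound g a Z S \<longleftrightarrow>
     (\<exists>k\<ge>0. \<forall>y. \<exists>c\<in>polyhedral_cone g a Z S. norm (y - c) \<le> k * cone_violation g a Z S y)"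

lemma zero_in_polyhedral_cone: "linear g \<Longrightarrow> 0 \<in> polyhedral_cone g a Z S"
  by (simp add: polyhedral_cone_def linear_0)

lemma closed_polyhedral_cone:
  fixes g :: "'a::euclidean_space \<Rightarrow> 'b::real_normed_vector"
  assumes "linear g"
  shows "closed (polyhedral_cone g a Z S)"
proof -
  have "polyhedral_cone g a Z S =
          {c. g c = 0} \<inter> (\<Inter>j\<in>Z. {c. a j \<bullet> c = 0}) \<inter> (\<Inter>j\<in>S. {c. a j \<bullet> c \<ge> 0})"
    by (auto simp: polyhedral_cone_def)
  moreover have "closed {c. g c = 0}"
    using assms by (intro closed_Collect_eq linear_continuous_on continuous_on_const)
      (simp add: linear_conv_bounded_linear)
  ultimately show ?thesis
    by (auto intro!: closed_Int closed_INT closed_hyperplane closed_halfspace_ge)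
qed

lemma cone_violation_nonneg: "cone_violation g a Z S y \<ge> 0"
  unfolding cone_violation_def by (intro add_nonneg_nonneg sum_nonneg) auto

lemma cone_violation_insert_inequality:
  fixes a :: "'i::finite \<Rightarrow> 'a::real_inner"
  assumes "j \<notin> S"
  shows "cone_violation g a Z (insert j S) y = max 0 (- (a j \<bullet> y)) + cone_violation g a Z S y"
  using assms by (simp add: cone_violation_def)

lemma cone_violation_insert_equality:
  fixes a :: "'i::finite \<Rightarrow> 'a::real_inner"
  assumes "z \<in> polyhedral_cone g a Z S" "j \<notin> Z"
  shows "cone_violation g a (insert j Z) S z = \<bar>a j \<bullet> z\<bar>"
  using assms by (simp add: cone_violation_def polyhedral_cone_def)

lemma has_error_bound_no_inequalities:
  fixes g :: "'a::euclidean_space \<Rightarrow> 'b::euclidean_space" and a :: "'i::finite \<Rightarrow> 'a"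
  assumes "linear g"
  shows "has_error_bound g a Z {}"
proof -
  define f where "f w = (g w, \<chi> j. if j \<in> Z then a j \<bullet> w else 0)" for w
  have "linear f"
    unfolding f_def using assms
    by (intro linearI) (auto simp: linear_add linear_scale vec_eq_iff algebra_simps)
  then obtain k where k: "k \<ge> 0" "\<And>y. \<exists>c. f c = 0 \<and> norm (y - c) \<le> k * norm (f y)"
    using linear_kernel_distance_bound by blast
  have viol: "norm (f y) \<le> cone_violation g a Z {} y" for y
  proof -
    have "norm (f y) \<le> norm (g y) + norm (\<chi> j. if j \<in> Z then a j \<bullet> y else 0)"
      unfolding f_def by (rule norm_Pair_le)
    also have "norm (\<chi> j. if j \<in> Z then a j \<bullet> y else 0) \<le> (\<Sum>j\<in>UNIV. \<bar>if j \<in> Z then a j \<bullet> y else 0\<bar>)"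
      using norm_le_l1_cart[of "\<chi> j. if j \<in> Z then a j \<bullet> y else 0"] by simp
    also have "\<dots> = (\<Sum>j\<in>Z. \<bar>a j \<bullet> y\<bar>)"
      by (simp add: if_distrib sum.If_cases)
    finally show ?thesis
      by (simp add: cone_violation_def)
  qed
  have cone: "c \<in> polyhedral_cone g a Z {}" if "f c = 0" for c
  proof -
    have "g c = 0" and Zc: "\<And>j. (if j \<in> Z then a j \<bullet> c else 0) = 0"
      using that by (simp_all add: f_def vec_eq_iff zero_prod_def)
    moreover have "a j \<bullet> c = 0" if "j \<in> Z" for j
      using Zc[of j] that by simp
    ultimately show ?thesis
      unfolding polyhedral_cone_def by simp
  qed
  have "\<exists>c\<in>polyhedral_cone g a Z {}. norm (y - c) \<le> k * cone_violation g a Z {} y" for y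
  proof -
    obtain c where "f c = 0" "norm (y - c) \<le> k * norm (f y)"
      using k(2) by blast
    moreover have "k * norm (f y) \<le> k * cone_violation g a Z {} y"
      using viol k(1) by (rule mult_left_mono)
    ultimately show ?thesis
      using cone by (blast intro: order_trans)
  qed
  then show ?thesis
    unfolding has_error_bound_def using k(1) by blast
qed

lemma polyhedral_cone_tighten_subset:
  "polyhedral_cone g a (insert j Z) S \<subseteq> polyhedral_cone g a Z (insert j S)"
  by (auto simp: polyhedral_cone_def)

lemma error_bound_tighten_violated:
  fixes a :: "'i::finite \<Rightarrow> 'a::real_inner"
  assumes bound: "\<And>y. \<exists>c\<in>polyhedral_cone g a (insert j Z) S.
                        norm (y - c) \<le> k0 * cone_violation g a (insert j Z) S y"
    and "k0 \<ge> 0" and z: "z \<in> polyhedral_cone g a Z S" "a j \<bullet> z < 0"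
  shows "\<exists>c\<in>polyhedral_cone g a Z (insert j S).
           norm (y - c) \<le> norm (y - z) + k0 * (max 0 (- (a j \<bullet> y)) + norm (a j) * norm (y - z))"
proof -
  have "j \<notin> Z"
    using z by (auto simp: polyhedral_cone_def)
  with z(1) have violation: "cone_violation g a (insert j Z) S z = \<bar>a j \<bullet> z\<bar>"
    by (rule cone_violation_insert_equality)
  obtain c where c: "c \<in> polyhedral_cone g a (insert j Z) S" "norm (z - c) \<le> k0 * \<bar>a j \<bullet> z\<bar>"
    using bound[of z] unfolding violation by blast
  have "\<bar>a j \<bullet> z\<bar> = - (a j \<bullet> y) + a j \<bullet> (y - z)"
    using z(2) by (simp add: inner_diff_right)
  also have "\<dots> \<le> max 0 (- (a j \<bullet> y)) + norm (a j) * norm (y - z)"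
    using norm_cauchy_schwarz[of "a j" "y - z"] by linarith
  finally have "k0 * \<bar>a j \<bullet> z\<bar> \<le> k0 * (max 0 (- (a j \<bullet> y)) + norm (a j) * norm (y - z))"
    using \<open>k0 \<ge> 0\<close> by (rule mult_left_mono)
  moreover have "norm (y - c) \<le> norm (y - z) + norm (z - c)"
    by (rule norm_diff_triangle_le[of y z _ c]) auto
  ultimately have "norm (y - c) \<le> norm (y - z) + k0 * (max 0 (- (a j \<bullet> y)) + norm (a j) * norm (y - z))"
    using c(2) by linarith
  with c(1) show ?thesis
    using polyhedral_cone_tighten_subset[of g a j Z S] by blast
qed

text \<open>Approximate y in the cone without the j-th inequality; if the approximation z violates
  it, approximate z in the face of the cone on which the j-th constraint holds with equality.\<close>
lemma has_error_bound_insert_inequality: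
  fixes a :: "'i::finite \<Rightarrow> 'a::real_inner"
  assumes "has_error_bound g a Z S" "has_error_bound g a (insert j Z) S" "j \<notin> S"
  shows "has_error_bound g a Z (insert j S)"
proof -
  obtain k1 where k1: "k1 \<ge> 0"
    "\<And>y. \<exists>z\<in>polyhedral_cone g a Z S. norm (y - z) \<le> k1 * cone_violation g a Z S y"
    using assms(1) unfolding has_error_bound_def by blast
  obtain k0 where k0: "k0 \<ge> 0"
    "\<And>y. \<exists>c\<in>polyhedral_cone g a (insert j Z) S. norm (y - c) \<le> k0 * cone_violation g a (insert j Z) S y"
    using assms(2) unfolding has_error_bound_def by blast
  define k where "k = k1 + k0 * (1 + norm (a j) * k1)"
  have "\<exists>c\<in>polyhedral_cone g a Z (insert j S). norm (y - c) \<le> k * cone_violation g a Z (insert j S) y"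
    for y
  proof -
    define R where "R = cone_violation g a Z (insert j S) y"
    have "R = max 0 (- (a j \<bullet> y)) + cone_violation g a Z S y"
      unfolding R_def using assms(3) by (rule cone_violation_insert_inequality)
    then have R: "cone_violation g a Z S y \<le> R" "max 0 (- (a j \<bullet> y)) \<le> R"
      using cone_violation_nonneg[of g a Z S y] by linarith+
    obtain z where z: "z \<in> polyhedral_cone g a Z S" "norm (y - z) \<le> k1 * cone_violation g a Z S y"
      using k1(2) by blast
    then have yz: "norm (y - z) \<le> k1 * R"
      using R(1) k1(1) by (meson mult_left_mono order_trans)
    consider "a j \<bullet> z \<ge> 0" | "a j \<bullet> z < 0"
      by linarith
    then show ?thesis
    proof cases
      case 1
      then have "z \<in> polyhedral_cone g a Z (insert j S)"
        using z(1) by (simp add: polyhedral_cone_def)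
      moreover have "k1 * R \<le> k * R"
        unfolding k_def using k0(1) k1(1) R cone_violation_nonneg[of g a Z S y]
        by (intro mult_right_mono) auto
      then have "norm (y - z) \<le> k * R"
        using yz by linarith
      ultimately show ?thesis
        unfolding R_def by blast
    next
      case 2
      obtain c where c: "c \<in> polyhedral_cone g a Z (insert j S)"
        "norm (y - c) \<le> norm (y - z) + k0 * (max 0 (- (a j \<bullet> y)) + norm (a j) * norm (y - z))"
        using error_bound_tighten_violated[OF k0(2) k0(1) z(1) 2] by blast
      have "norm (a j) * norm (y - z) \<le> norm (a j) * (k1 * R)"
        using yz by (rule mult_left_mono) simp
      with R(2) have "max 0 (- (a j \<bullet> y)) + norm (a j) * norm (y - z) \<le> R + norm (a j) * (k1 * R)"
        by linarith
      then have "k0 * (max 0 (- (a j \<bullet> y)) + norm (a j) * norm (y - z))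
                   \<le> k0 * (R + norm (a j) * (k1 * R))"
        using k0(1) by (rule mult_left_mono)
      with c(2) yz have "norm (y - c) \<le> k1 * R + k0 * (R + norm (a j) * (k1 * R))"
        by linarith
      also have "\<dots> = k * R"
        unfolding k_def by (simp add: algebra_simps)
      finally show ?thesis
        using c(1) unfolding R_def by blast
    qed
  qed
  moreover have "k \<ge> 0"
    unfolding k_def using k0(1) k1(1) by simp
  ultimately show ?thesis
    unfolding has_error_bound_def by blast
qed

theorem hoffman_error_bound:
  fixes g :: "'a::euclidean_space \<Rightarrow> 'b::euclidean_space" and a :: "'i::finite \<Rightarrow> 'a"
  assumes "linear g"
  shows "has_error_bound g a Z S"
proof -
  have "finite S" by simp
  then show ?thesis
  proof (induction S arbitrary: Z rule: finite_induct)
    case empty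
    show ?case using assms by (rule has_error_bound_no_inequalities)
  next
    case (insert j S)
    show ?case
      using insert.IH[of Z] insert.IH[of "insert j Z"] insert.hyps(2)
      by (rule has_error_bound_insert_inequality)
  qed
qed

section \<open>Geometric convergence of Fejer monotone sequences\<close>

lemma convergent_with_tail_bound:
  fixes X :: "nat \<Rightarrow> 'a::complete_space"
  assumes tail: "\<And>n m. n \<le> m \<Longrightarrow> dist (X m) (X n) \<le> r n" and "r \<longlonglongrightarrow> 0"
  obtains l where "X \<longlonglongrightarrow> l" "\<And>n. dist (X n) l \<le> r n"
proof -
  have "Cauchy X"
  proof (rule metric_CauchyI)
    fix e :: real assume "0 < e"
    then obtain N where N: "r N < e / 2"
      using \<open>r \<longlonglongrightarrow> 0\<close> by (metis half_gt_zero order_tendstoD(2) eventually_sequentially order_refl)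
    have "dist (X m) (X n) < e" if "N \<le> m" "N \<le> n" for m n
      using dist_triangle2[of "X m" "X n" "X N"] tail[OF that(1)] tail[OF that(2)] N by linarith
    then show "\<exists>N. \<forall>m\<ge>N. \<forall>n\<ge>N. dist (X m) (X n) < e"
      by blast
  qed
  then obtain l where l: "X \<longlonglongrightarrow> l"
    by (auto simp: Cauchy_convergent_iff convergent_def)
  moreover have "dist (X n) l \<le> r n" for n
  proof (rule tendsto_upperbound)
    show "((\<lambda>m. dist (X n) (X m)) \<longlonglongrightarrow> dist (X n) l)"
      using l by (intro tendsto_intros)
    show "\<forall>\<^sub>F m in sequentially. dist (X n) (X m) \<le> r n"
      unfolding eventually_sequentially by (metis tail dist_commute)
  qed simp
  ultimately show thesis
    using that by blast
qed

lemma infdist_le_if_dist_le: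
  fixes C :: "'a::heine_borel set"
  assumes "closed C" "C \<noteq> {}" and fejer: "\<And>c. c \<in> C \<Longrightarrow> dist z c \<le> dist y c"
  shows "infdist z C \<le> infdist y C"
proof -
  obtain c where "c \<in> C" "infdist y C = dist y c"
    using infdist_attains_inf[OF assms(1,2)] by blast
  then show ?thesis
    using infdist_le[of c C z] fejer[of c] by linarith
qed

lemma fejer_iterates_tail_bound:
  fixes T :: "'a::heine_borel \<Rightarrow> 'a"
  assumes "closed C" "C \<noteq> {}" and fejer: "\<And>y c. c \<in> C \<Longrightarrow> dist (T y) c \<le> dist y c"
    and "n \<le> m"
  shows "dist ((T ^^ m) x0) ((T ^^ n) x0) \<le> 2 * infdist ((T ^^ n) x0) C"
proof -
  obtain c where c: "c \<in> C" "infdist ((T ^^ n) x0) C = dist ((T ^^ n) x0) c"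
    using infdist_attains_inf[OF assms(1,2)] by blast
  have "dist ((T ^^ m) x0) c \<le> dist ((T ^^ n) x0) c"
    using \<open>n \<le> m\<close>
  proof (induction m rule: dec_induct)
    case (step m)
    then show ?case
      using fejer[OF c(1), of "(T ^^ m) x0"] by simp
  qed simp
  then show ?thesis
    using dist_triangle2[of "(T ^^ m) x0" "(T ^^ n) x0" c] c(2) by linarith
qed

lemma infdist_iterates_le:
  fixes T :: "'a::heine_borel \<Rightarrow> 'a"
  assumes C: "closed C" "C \<noteq> {}" and q: "0 < q" "q \<le> 1"
    and fejer: "\<And>y c. c \<in> C \<Longrightarrow> dist (T y) c \<le> dist y c"
    and contraction: "\<And>y. infdist (T (T y)) C \<le> q * infdist (T y) C"
  shows "infdist ((T ^^ n) x0) C \<le> infdist x0 C / q * q ^ n"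
proof -
  have after_first: "infdist ((T ^^ Suc n) x0) C \<le> q ^ n * infdist x0 C" for n
  proof (induction n)
    case 0
    show ?case
      using infdist_le_if_dist_le[OF C fejer] by simp
  next
    case (Suc n)
    have "infdist ((T ^^ Suc (Suc n)) x0) C \<le> q * infdist ((T ^^ Suc n) x0) C"
      using contraction[of "(T ^^ n) x0"] by simp
    also have "\<dots> \<le> q * (q ^ n * infdist x0 C)"
      using Suc q(1) by (simp add: mult_left_mono)
    finally show ?case
      by simp
  qed
  show ?thesis
  proof (cases n)
    case 0
    have "infdist x0 C \<le> infdist x0 C / q"
      using q infdist_nonneg[of x0 C] by (simp add: le_divide_eq mult_left_le)
    with 0 show ?thesis
      by simp
  next
    case (Suc m)
    with after_first[of m] q(1) show ?thesis
      by (simp add: mult.commute)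
  qed
qed

theorem fejer_linear_convergence:
  fixes T :: "'a::heine_borel \<Rightarrow> 'a"
  assumes C: "closed C" "C \<noteq> {}" and q: "0 < q" "q < 1"
    and fejer: "\<And>y c. c \<in> C \<Longrightarrow> dist (T y) c \<le> dist y c"
    and contraction: "\<And>y. infdist (T (T y)) C \<le> q * infdist (T y) C"
  shows "\<exists>l\<in>C. (\<lambda>n. (T ^^ n) x0) \<longlonglongrightarrow> l \<and> (\<exists>K. \<forall>n. dist ((T ^^ n) x0) l \<le> K * q ^ n)"
proof -
  define B where "B = infdist x0 C / q"
  have D: "infdist ((T ^^ n) x0) C \<le> B * q ^ n" for n
    unfolding B_def using C q fejer contraction by (intro infdist_iterates_le) simp_all
  have lim: "(\<lambda>n. c * q ^ n) \<longlonglongrightarrow> 0" for c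
    using q by (intro tendsto_mult_right_zero LIMSEQ_power_zero) simp_all
  obtain l where l: "(\<lambda>n. (T ^^ n) x0) \<longlonglongrightarrow> l" "\<And>n. dist ((T ^^ n) x0) l \<le> 2 * B * q ^ n"
  proof (rule convergent_with_tail_bound)
    show "dist ((T ^^ m) x0) ((T ^^ n) x0) \<le> 2 * B * q ^ n" if "n \<le> m" for n m
      using fejer_iterates_tail_bound[OF C fejer that, of x0] D[of n] by simp
  qed (use lim in auto)
  have "(\<lambda>n. infdist ((T ^^ n) x0) C) \<longlonglongrightarrow> infdist l C"
    using l(1) by (rule tendsto_infdist)
  moreover have "(\<lambda>n. infdist ((T ^^ n) x0) C) \<longlonglongrightarrow> 0"
  proof (rule tendsto_sandwich[OF _ _ tendsto_const lim])
    show "\<forall>\<^sub>F n in sequentially. 0 \<le> infdist ((T ^^ n) x0) C"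
      by (simp add: infdist_nonneg)
    show "\<forall>\<^sub>F n in sequentially. infdist ((T ^^ n) x0) C \<le> B * q ^ n"
      using D by simp
  qed
  ultimately have "l \<in> C"
    using LIMSEQ_unique in_closed_iff_infdist_zero[OF C] by metis
  with l show ?thesis
    by blast
qed

lemma infdist_contraction:
  fixes y z :: "'a::heine_borel"
  assumes C: "closed C" "C \<noteq> {}" and "K \<ge> 1"
    and firm: "\<And>c. c \<in> C \<Longrightarrow> (dist z c)\<^sup>2 + r\<^sup>2 \<le> (dist y c)\<^sup>2"
    and error_bound: "infdist y C \<le> K * r"
  shows "infdist z C \<le> sqrt (1 - 1 / K\<^sup>2) * infdist y C"
proof -
  obtain c where c: "c \<in> C" and D: "infdist y C = dist y c"
    using infdist_attains_inf[OF C] by blast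
  have "dist y c / K \<le> r"
    using error_bound \<open>K \<ge> 1\<close> D by (simp add: divide_le_eq mult.commute)
  then have "(dist y c / K)\<^sup>2 \<le> r\<^sup>2"
    using \<open>K \<ge> 1\<close> by (intro power_mono) simp_all
  have "(infdist z C)\<^sup>2 \<le> (dist z c)\<^sup>2"
    using infdist_le[OF c] infdist_nonneg by (intro power_mono)
  also have "\<dots> \<le> (dist y c)\<^sup>2 - (dist y c / K)\<^sup>2"
    using firm[OF c] \<open>(dist y c / K)\<^sup>2 \<le> r\<^sup>2\<close> by linarith
  also have "\<dots> = (1 - 1 / K\<^sup>2) * (infdist y C)\<^sup>2"
    using D by (simp add: power_divide field_simps)
  finally have "infdist z C \<le> sqrt ((1 - 1 / K\<^sup>2) * (infdist y C)\<^sup>2)"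
    by (rule real_le_rsqrt)
  then show ?thesis
    using infdist_nonneg[of y C] by (simp add: real_sqrt_mult)
qed

theorem residual_descent_linear_convergence:
  fixes T :: "'a::heine_borel \<Rightarrow> 'a" and r :: "'a \<Rightarrow> real"
  assumes C: "closed C" "C \<noteq> {}" and "K > 1"
    and descent: "\<And>y c. c \<in> C \<Longrightarrow> (dist (T y) c)\<^sup>2 + (r y)\<^sup>2 \<le> (dist y c)\<^sup>2"
    and error_bound: "\<And>y. infdist (T y) C \<le> K * r (T y)"
  shows "\<exists>l\<in>C. (\<lambda>n. (T ^^ n) x0) \<longlonglongrightarrow> l \<and>
           (\<exists>B. \<forall>n. dist ((T ^^ n) x0) l \<le> B * sqrt (1 - 1 / K\<^sup>2) ^ n)"
proof (rule fejer_linear_convergence[OF C])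
  show "0 < sqrt (1 - 1 / K\<^sup>2)" "sqrt (1 - 1 / K\<^sup>2) < 1"
    using \<open>K > 1\<close> by simp_all
  show "dist (T y) c \<le> dist y c" if "c \<in> C" for y c
  proof (rule power2_le_imp_le)
    show "(dist (T y) c)\<^sup>2 \<le> (dist y c)\<^sup>2"
      using descent[OF that, of y] zero_le_power2[of "r y"] by linarith
  qed simp
  show "infdist (T (T y)) C \<le> sqrt (1 - 1 / K\<^sup>2) * infdist (T y) C" for y
    using \<open>K > 1\<close> by (intro infdist_contraction[OF C _ descent error_bound]) simp
qed

section \<open>The projections P_b and P_v\<close>

lemma linear_Pb: "linear (Pb u fL fU)"
  unfolding Pb_def
  by (intro linearI) (auto simp: inner_add_right scaleR_add_left sum.distrib scaleR_sum_right)

lemma Pb_self_adjoint: "Pb u fL fU y \<bullet> w = y \<bullet> Pb u fL fU w"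
  unfolding Pb_def inner_sum_left inner_sum_right
  by (intro sum.cong) (auto simp: inner_commute)

lemma Pv_sgn_mismatch:
  assumes "i \<in> {1..M}" "sgn (y $ v i) \<noteq> s i"
  shows "Pv v M s y $ v i = 0"
  using assms unfolding Pv_def by auto

lemma Pv_firmly_quasinonexpansive:
  assumes signs: "\<And>i. s i \<in> {-1, 0, 1}" and z: "z \<in> sign_set v M s"
  shows "(dist (Pv v M s y) z)\<^sup>2 + (dist y (Pv v M s y))\<^sup>2 \<le> (dist y z)\<^sup>2"
proof -
  have componentwise: "((Pv v M s y - z) $ j)\<^sup>2 + ((y - Pv v M s y) $ j)\<^sup>2 \<le> ((y - z) $ j)\<^sup>2" for j
  proof (cases "\<exists>i\<in>{1..M}. j = v i \<and> sgn (y $ j) \<noteq> s i")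
    case True
    then obtain i where i: "i \<in> {1..M}" "j = v i" "sgn (y $ j) \<noteq> s i"
      by blast
    have "(s i \<noteq> 0 \<longrightarrow> s i * z $ j \<ge> 0) \<and> (s i = 0 \<longrightarrow> z $ j = 0)"
      using z i unfolding sign_set_def by auto
    then have "y $ j * z $ j \<le> 0"
      using signs[of i] i(3) by (auto simp: sgn_if mult_le_0_iff split: if_splits)
    moreover have "Pv v M s y $ j = 0"
      using Pv_sgn_mismatch i by simp
    ultimately show ?thesis
      by (simp add: power2_eq_square algebra_simps)
  next
    case False
    then have "Pv v M s y $ j = y $ j"
      unfolding Pv_def vec_lambda_beta by (rule if_not_P)
    then show ?thesis
      by simp
  qed
  have norm_sq: "(norm w)\<^sup>2 = (\<Sum>j\<in>UNIV. (w $ j)\<^sup>2)" for w :: "real^'n"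
    by (simp add: norm_vec_def L2_set_def sum_nonneg)
  show ?thesis
    unfolding dist_norm norm_sq sum.distrib[symmetric] by (rule sum_mono) (rule componentwise)
qed

definition sign_constraint :: "real^'n \<Rightarrow> 'n \<Rightarrow> real^'n" where
  "sign_constraint x j = axis j (if x $ j = 0 then 1 else sgn (x $ j))"

lemma inner_sign_constraint:
  "sign_constraint x j \<bullet> y = (if x $ j = 0 then y $ j else sgn (x $ j) * y $ j)"
  by (simp add: sign_constraint_def inner_axis')

lemma sign_set_sgn_eq:
  "sign_set v M (\<lambda>i. sgn (x $ v i)) =
     {y. (\<forall>j\<in>{j\<in>v ` {1..M}. x $ j = 0}. sign_constraint x j \<bullet> y = 0) \<and>
         (\<forall>j\<in>{j\<in>v ` {1..M}. x $ j \<noteq> 0}. sign_constraint x j \<bullet> y \<ge> 0)}"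
  unfolding sign_set_def inner_sign_constraint by (auto simp: sgn_0_0)

text \<open>A violated sign constraint at a sampled vertex is a coordinate that P_v sets to zero.\<close>
lemma sign_constraint_violation_le:
  assumes "j \<in> v ` {1..M}"
  shows "(if x $ j = 0 then \<bar>sign_constraint x j \<bullet> y\<bar> else max 0 (- (sign_constraint x j \<bullet> y)))
           \<le> norm (y - Pv v M (\<lambda>i. sgn (x $ v i)) y)"
proof -
  obtain i where i: "i \<in> {1..M}" "j = v i"
    using assms by blast
  let ?w = "y - Pv v M (\<lambda>i. sgn (x $ v i)) y"
  have "(if x $ j = 0 then \<bar>sign_constraint x j \<bullet> y\<bar> else max 0 (- (sign_constraint x j \<bullet> y)))
          \<le> \<bar>?w $ j\<bar>"
  proof (cases "sgn (y $ j) = sgn (x $ j)")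
    case True
    then show ?thesis
      by (auto simp: inner_sign_constraint sgn_if split: if_splits)
  next
    case False
    then have "?w $ j = y $ j"
      using Pv_sgn_mismatch[OF i(1)] i(2) by simp
    then show ?thesis
      by (auto simp: inner_sign_constraint abs_mult sgn_if)
  qed
  then show ?thesis
    using component_le_norm_cart[of ?w j] by linarith
qed

lemma sum_le_CARD_mult:
  fixes f :: "'i::finite \<Rightarrow> real" and r :: real
  assumes "\<And>j. j \<in> A \<Longrightarrow> f j \<le> r" "0 \<le> r"
  shows "sum f A \<le> CARD('i) * r"
proof -
  have "sum f A \<le> card A * r"
    using assms(1) by (rule sum_bounded_above)
  also have "\<dots> \<le> CARD('i) * r"
    using assms(2) card_mono[of UNIV A] by (simp add: mult_right_mono)
  finally show ?thesis .
qed

locale band_projection =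
  fixes u :: "nat \<Rightarrow> real^'n" and fL fU :: nat
  assumes orthonormal:
      "\<forall>i\<in>{1..CARD('n)}. \<forall>j\<in>{1..CARD('n)}. u i \<bullet> u j = (if i = j then 1 else 0)"
    and band: "1 \<le> fL" "fU \<le> CARD('n)"
begin

lemma inner_Pb:
  assumes "i \<in> {1..CARD('n)}"
  shows "u i \<bullet> Pb u fL fU y = (if i \<in> {fL..fU} then u i \<bullet> y else 0)"
proof -
  have "u i \<bullet> Pb u fL fU y = (\<Sum>k\<in>{fL..fU}. (u k \<bullet> y) * (u i \<bullet> u k))"
    unfolding Pb_def by (simp add: inner_sum_right)
  also have "\<dots> = (\<Sum>k\<in>{fL..fU}. if k = i then u k \<bullet> y else 0)"
    using orthonormal assms band by (intro sum.cong) auto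
  finally show ?thesis
    by (simp add: sum.delta')
qed

lemma Pb_in_band_set: "Pb u fL fU y \<in> band_set u fL fU"
  unfolding band_set_def using inner_Pb by auto

lemma orthonormal_expansion: "(\<Sum>k\<in>{1..CARD('n)}. (u k \<bullet> y) *\<^sub>R u k) = y"
proof -
  let ?I = "{1..CARD('n)}"
  have inj: "inj_on u ?I"
    by (rule inj_onI) (metis orthonormal zero_neq_one)
  have orth: "pairwise orthogonal (u ` ?I)"
    unfolding pairwise_def orthogonal_def using orthonormal by auto
  moreover have "0 \<notin> u ` ?I"
    using orthonormal by fastforce
  ultimately have "independent (u ` ?I)"
    by (rule pairwise_orthogonal_independent)
  moreover have "dim (UNIV :: (real^'n) set) \<le> card (u ` ?I)"
    using card_image[OF inj] by simp
  ultimately have "UNIV \<subseteq> span (u ` ?I)"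
    by (rule card_ge_dim_independent[OF subset_UNIV])
  have "(\<Sum>k\<in>?I. (u k \<bullet> y) *\<^sub>R u k) = (\<Sum>b\<in>u ` ?I. (y \<bullet> b) *\<^sub>R b)"
    unfolding sum.reindex[OF inj] comp_def by (simp add: inner_commute)
  also have "\<dots> = y"
    using orth orthonormal \<open>UNIV \<subseteq> span (u ` ?I)\<close>
    by (intro orthonormal_basis_expand) (auto simp: norm_eq_1)
  finally show ?thesis .
qed

lemma Pb_eq_self_iff: "Pb u fL fU y = y \<longleftrightarrow> y \<in> band_set u fL fU"
proof
  assume "Pb u fL fU y = y"
  then show "y \<in> band_set u fL fU"
    using Pb_in_band_set by metis
next
  assume "y \<in> band_set u fL fU"
  then have "(\<Sum>k\<in>{1..CARD('n)}. (u k \<bullet> y) *\<^sub>R u k) = (\<Sum>k\<in>{fL..fU}. (u k \<bullet> y) *\<^sub>R u k)"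
    using band unfolding band_set_def by (intro sum.mono_neutral_right) auto
  then show "Pb u fL fU y = y"
    using orthonormal_expansion by (simp add: Pb_def)
qed

lemma Pb_Pb: "Pb u fL fU (Pb u fL fU y) = Pb u fL fU y"
  using Pb_eq_self_iff Pb_in_band_set by blast

lemma Pb_pythagoras:
  assumes "z \<in> band_set u fL fU"
  shows "(dist (Pb u fL fU y) z)\<^sup>2 + (dist y (Pb u fL fU y))\<^sup>2 = (dist y z)\<^sup>2"
proof -
  let ?P = "Pb u fL fU"
  have "?P z = z"
    using assms Pb_eq_self_iff by blast
  then have "(y - ?P y) \<bullet> (?P y - z) = (y - ?P y) \<bullet> ?P (y - z)"
    by (simp add: linear_diff[OF linear_Pb])
  also have "\<dots> = ?P (y - ?P y) \<bullet> (y - z)"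
    by (rule Pb_self_adjoint[symmetric])
  also have "\<dots> = 0"
    by (simp add: linear_diff[OF linear_Pb] Pb_Pb)
  finally have "orthogonal (y - ?P y) (?P y - z)"
    by (simp add: orthogonal_def)
  from norm_add_Pythagorean[OF this] show ?thesis
    by (simp add: dist_norm add.commute)
qed

lemma linear_id_minus_Pb: "linear (\<lambda>y. y - Pb u fL fU y)"
  by (intro linear_compose_sub linear_id[unfolded id_def] linear_Pb)

lemma band_set_eq_kernel: "band_set u fL fU = {y. y - Pb u fL fU y = 0}"
proof -
  have "y - Pb u fL fU y = 0 \<longleftrightarrow> y \<in> band_set u fL fU" for y
    unfolding right_minus_eq Pb_eq_self_iff[symmetric] by (rule eq_commute)
  then show ?thesis
    by blast
qed

lemma band_sign_set_eq_polyhedral_cone: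
  "band_set u fL fU \<inter> sign_set v M (\<lambda>i. sgn (x $ v i)) =
     polyhedral_cone (\<lambda>y. y - Pb u fL fU y) (sign_constraint x)
       {j\<in>v ` {1..M}. x $ j = 0} {j\<in>v ` {1..M}. x $ j \<noteq> 0}"
  unfolding sign_set_sgn_eq polyhedral_cone_def band_set_eq_kernel by blast

lemma closed_band_sign_set: "closed (band_set u fL fU \<inter> sign_set v M (\<lambda>i. sgn (x $ v i)))"
  unfolding band_sign_set_eq_polyhedral_cone by (rule closed_polyhedral_cone[OF linear_id_minus_Pb])

lemma zero_in_band_sign_set: "0 \<in> band_set u fL fU \<inter> sign_set v M (\<lambda>i. sgn (x $ v i))"
  unfolding band_sign_set_eq_polyhedral_cone by (rule zero_in_polyhedral_cone[OF linear_id_minus_Pb])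

lemma band_sign_cone_violation_le:
  assumes "y \<in> band_set u fL fU"
  shows "cone_violation (\<lambda>y. y - Pb u fL fU y) (sign_constraint x)
           {j\<in>v ` {1..M}. x $ j = 0} {j\<in>v ` {1..M}. x $ j \<noteq> 0} y
         \<le> 2 * CARD('n) * dist y (Pv v M (\<lambda>i. sgn (x $ v i)) y)"
proof -
  let ?r = "dist y (Pv v M (\<lambda>i. sgn (x $ v i)) y)"
  have "(\<Sum>j\<in>{j\<in>v ` {1..M}. x $ j = 0}. \<bar>sign_constraint x j \<bullet> y\<bar>) \<le> CARD('n) * ?r"
    using sign_constraint_violation_le[of _ v M x y]
    by (intro sum_le_CARD_mult) (fastforce simp: dist_norm)+
  moreover have "(\<Sum>j\<in>{j\<in>v ` {1..M}. x $ j \<noteq> 0}. max 0 (- (sign_constraint x j \<bullet> y))) \<le> CARD('n) * ?r"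
    using sign_constraint_violation_le[of _ v M x y]
    by (intro sum_le_CARD_mult) (fastforce simp: dist_norm)+
  moreover have "y - Pb u fL fU y = 0"
    using assms unfolding band_set_eq_kernel by simp
  ultimately show ?thesis
    by (simp add: cone_violation_def)
qed

lemma band_sign_error_bound:
  obtains K where "K > 1"
    "\<And>y. y \<in> band_set u fL fU \<Longrightarrow>
       infdist y (band_set u fL fU \<inter> sign_set v M (\<lambda>i. sgn (x $ v i)))
         \<le> K * dist y (Pv v M (\<lambda>i. sgn (x $ v i)) y)"
proof -
  let ?g = "\<lambda>y. y - Pb u fL fU y"
  let ?Z = "{j\<in>v ` {1..M}. x $ j = 0}" and ?S = "{j\<in>v ` {1..M}. x $ j \<noteq> 0}"
  let ?C = "band_set u fL fU \<inter> sign_set v M (\<lambda>i. sgn (x $ v i))"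
  obtain \<kappa> where \<kappa>: "\<kappa> \<ge> 0"
    "\<And>y. \<exists>c\<in>?C. norm (y - c) \<le> \<kappa> * cone_violation ?g (sign_constraint x) ?Z ?S y"
    using hoffman_error_bound[OF linear_id_minus_Pb, of "sign_constraint x" ?Z ?S]
    unfolding has_error_bound_def band_sign_set_eq_polyhedral_cone by blast
  define K where "K = 2 * CARD('n) * \<kappa> + 2"
  have "infdist y ?C \<le> K * dist y (Pv v M (\<lambda>i. sgn (x $ v i)) y)" if "y \<in> band_set u fL fU" for y
  proof -
    obtain c where "c \<in> ?C" "norm (y - c) \<le> \<kappa> * cone_violation ?g (sign_constraint x) ?Z ?S y"
      using \<kappa>(2) by blast
    then have "infdist y ?C \<le> \<kappa> * cone_violation ?g (sign_constraint x) ?Z ?S y"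
      using infdist_le[of c ?C y] by (simp add: dist_norm)
    also have "\<dots> \<le> \<kappa> * (2 * CARD('n) * dist y (Pv v M (\<lambda>i. sgn (x $ v i)) y))"
      using band_sign_cone_violation_le[OF that] \<kappa>(1) by (rule mult_left_mono)
    also have "\<dots> \<le> K * dist y (Pv v M (\<lambda>i. sgn (x $ v i)) y)"
      unfolding K_def by (simp add: algebra_simps)
    finally show ?thesis .
  qed
  moreover have "K > 1"
    unfolding K_def using \<kappa>(1) by (simp add: add_pos_nonneg)
  ultimately show thesis
    using that by blast
qed

lemma Pb_Pv_residual_descent:
  assumes "c \<in> band_set u fL fU \<inter> sign_set v M s" "\<And>i. s i \<in> {-1, 0, 1}"
  shows "(dist (Pb u fL fU (Pv v M s y)) c)\<^sup>2 + (dist y (Pv v M s y))\<^sup>2 \<le> (dist y c)\<^sup>2"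
proof -
  have "(dist (Pb u fL fU (Pv v M s y)) c)\<^sup>2 \<le> (dist (Pv v M s y) c)\<^sup>2"
    using Pb_pythagoras[OF IntD1[OF assms(1)], of "Pv v M s y"]
      zero_le_power2[of "dist (Pv v M s y) (Pb u fL fU (Pv v M s y))"]
    by linarith
  moreover have "(dist (Pv v M s y) c)\<^sup>2 + (dist y (Pv v M s y))\<^sup>2 \<le> (dist y c)\<^sup>2"
    using Pv_firmly_quasinonexpansive[of s c v M y] assms by simp
  ultimately show ?thesis
    by linarith
qed

end

theorem theorem1:
  fixes W :: "real^'n^'n"
    and u :: "nat \<Rightarrow> real^'n"
    and lam :: "nat \<Rightarrow> real"
    and fL fU M :: nat
    and v :: "nat \<Rightarrow> 'n"
    and x :: "real^'n"
  assumes W_nonneg: "\<forall>i j. W $ i $ j \<ge> 0"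
    and W_sym: "\<forall>i j. W $ i $ j = W $ j $ i"
    and conn: "graph_connected W"
    and orthonormal: "\<forall>i\<in>{1..CARD('n)}. \<forall>j\<in>{1..CARD('n)}. u i \<bullet> u j = (if i = j then 1 else 0)"
    and eigen: "\<forall>k\<in>{1..CARD('n)}. laplacian W *v u k = lam k *\<^sub>R u k"
    and lam_first: "lam 1 = 0"
    and lam_sorted: "\<forall>i\<in>{1..CARD('n)}. \<forall>j\<in>{1..CARD('n)}. i \<le> j \<longrightarrow> lam i \<le> lam j"
    and band: "1 \<le> fL" "fL \<le> fU" "fU \<le> CARD('n)"
    and inj_v: "inj_on v {1..M}"
    and x_band: "x \<in> band_set u fL fU"
  shows "\<exists>q::real. 0 \<le> q \<and> q < 1 \<and>
    (\<forall>x0 :: real^'n.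
       let s = (\<lambda>i. sgn (x $ v i));
           C = band_set u fL fU \<inter> sign_set v M s;
           xs = (\<lambda>n. ((Pb u fL fU \<circ> Pv v M s) ^^ n) x0)
       in \<exists>xstar \<in> C. xs \<longlonglongrightarrow> xstar \<and>
            (\<exists>K. \<forall>n. norm (xs n - xstar) \<le> K * q ^ n))"
proof -
  interpret band_projection u fL fU
    using orthonormal band by unfold_locales
  define s where "s = (\<lambda>i. sgn (x $ v i))"
  define C where "C = band_set u fL fU \<inter> sign_set v M s"
  define T where "T = Pb u fL fU \<circ> Pv v M s"
  obtain K where K: "K > 1" "\<And>y. y \<in> band_set u fL fU \<Longrightarrow> infdist y C \<le> K * dist y (Pv v M s y)"
    unfolding C_def s_def by (rule band_sign_error_bound[of v M x]) blast
  have C: "closed C" "C \<noteq> {}"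
    unfolding C_def s_def using closed_band_sign_set zero_in_band_sign_set by blast+
  have descent: "(dist (T y) c)\<^sup>2 + (dist y (Pv v M s y))\<^sup>2 \<le> (dist y c)\<^sup>2" if "c \<in> C" for y c
    using that unfolding T_def C_def s_def comp_def by (rule Pb_Pv_residual_descent) (simp add: sgn_if)
  have error_bound: "infdist (T y) C \<le> K * dist (T y) (Pv v M s (T y))" for y
    using K(2) Pb_in_band_set by (simp add: T_def)
  have "\<exists>l\<in>C. (\<lambda>n. (T ^^ n) x0) \<longlonglongrightarrow> l \<and>
          (\<exists>B. \<forall>n. norm ((T ^^ n) x0 - l) \<le> B * sqrt (1 - 1 / K\<^sup>2) ^ n)" for x0
    using residual_descent_linear_convergence[where r = "\<lambda>y. dist y (Pv v M s y)",
        OF C K(1) descent error_bound]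
    unfolding dist_norm .
  moreover have "0 \<le> sqrt (1 - 1 / K\<^sup>2)" "sqrt (1 - 1 / K\<^sup>2) < 1"
    using K(1) by simp_all
  ultimately show ?thesis
    unfolding Let_def s_def[symmetric] C_def[symmetric] T_def[symmetric] by blast
qed

end
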